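(* Let $m\ge1$ be an integer and let $p=e^{-X}$ where $X$ has the gamma distribution with shape $m+1$ and rate $1$ (equivalently $p$ has density $\pi(p)=(-\log p)^m/m!$ on $(0,1)$). Conditionally on $p$, let $X_1,X_2,\dots$ be i.i.d. with $P(X_i=j\mid p)=p(1-p)^{j-1}$, $j=1,2,\dots$, let $K_n$ be the number of distinct values among $X_1,\dots,X_n$, and define $$\overrightarrow\nu(x)=\int_0^1\#\{j\ge1:\ p(1-p)^{j-1}\ge x\}\,\pi(p)\,dp,\qquad x\in(0,1).$$ Then $$\overrightarrow\nu(x)=\frac{(\log 1/x)^{m+2}}{(m+2)!}+O\big((\log x)^m\big),\qquad x\to0,$$ and $$\mathrm{E}(K_n)=\frac{(\log n)^{m+2}}{(m+2)!}+\gamma\frac{(\log n)^{m+1}}{(m+1)!}+o\big((\log n)^{m+1}\big),\qquad n\to\infty,$$ where $\gamma$ is the Euler–Mascheroni constant.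
   Context: $\mathrm{E}(K_n)$ is the unconditional expectation (averaging over $p$ and the draws). *)

theory Defs
  imports "HOL-Probability.Probability" "HOL-Library.Landau_Symbols"
begin

definition pi_dens :: "nat \<Rightarrow> real \<Rightarrow> real" where
  "pi_dens m p = (- ln p) ^ m / fact m"

text \<open>Law of X_i given p: P(X_i = j | p) = p (1-p)^(j-1), j = 1,2,...\<close>
definition geom1_pmf :: "real \<Rightarrow> nat pmf" where
  "geom1_pmf p = map_pmf Suc (geometric_pmf p)"

definition EK_cond :: "nat \<Rightarrow> real \<Rightarrow> real" where
  "EK_cond n p = measure_pmf.expectation (replicate_pmf n (geom1_pmf p))
                   (\<lambda>xs. real (card (set xs)))"

definition EK :: "nat \<Rightarrow> nat \<Rightarrow> real" where
  "EK m n = (LINT p:{0<..<1}|lborel. EK_cond n p * pi_dens m p)"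

definition nu_arrow :: "nat \<Rightarrow> real \<Rightarrow> real" where
  "nu_arrow m x = (LINT p:{0<..<1}|lborel.
      real (card {j::nat. j \<ge> 1 \<and> p * (1 - p) ^ (j - 1) \<ge> x}) * pi_dens m p)"

end

(*
  For fixed p, the number of indices j with p (1 - p)^(j - 1) >= x is floor (log (p/x) / -log (1 - p)) + 1,
  which lies between log (p/x) / p - log (1/x) and log (p/x) / p + 1.  Integrating against the density pi,
  the main term gives exactly (log 1/x)^(m+2) / (m+2)!, so nu(x) is that term up to O(log 1/x).

  Given p, the value j occurs among n draws with probability 1 - (1 - w_j)^n, the integral of n (1 - y)^(n-1)
  over (0, w_j].  Summing over j and using Tonelli, E K_n is the integral of n (1 - y)^(n-1) nu(y) over (0,1).
  Against this kernel (log 1/y)^k / k! integrates to the iterated harmonic sum H^(k)_n, defined by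
  H^(0) = 1 and H^(k+1)_n = sum_{j <= n} H^(k)_j / j, and a telescoping estimate gives
  H^(k)_n = H_n^k / k! + O(H_n^(k-2)).  The expansion follows from H_n = log n + gamma + o(1).
*)

theory Submission
  imports Defs "HOL-Analysis.Harmonic_Numbers" "HOL-Real_Asymp.Real_Asymp"
begin

section \<open>Iterated harmonic sums\<close>

lemma power_diff_bounds:
  fixes a b :: real
  assumes "0 \<le> b" "b \<le> a"
  shows "real r * (a - b) * b ^ (r - 1) \<le> a ^ r - b ^ r"
    and "a ^ r - b ^ r \<le> real r * (a - b) * a ^ (r - 1)"
proof -
  have eq: "a ^ r - b ^ r = (a - b) * (\<Sum>i<r. b ^ (r - Suc i) * a ^ i)"
    by (rule power_diff_sumr2)
  have "b ^ (r - 1) \<le> b ^ (r - Suc i) * a ^ i" "b ^ (r - Suc i) * a ^ i \<le> a ^ (r - 1)"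
    if "i < r" for i
  proof -
    have "b ^ (r - 1) = b ^ (r - Suc i) * b ^ i" "a ^ (r - 1) = a ^ (r - Suc i) * a ^ i"
      using that by (simp_all add: power_add[symmetric])
    then show "b ^ (r - 1) \<le> b ^ (r - Suc i) * a ^ i" "b ^ (r - Suc i) * a ^ i \<le> a ^ (r - 1)"
      using assms by (auto intro!: mult_left_mono mult_right_mono power_mono)
  qed
  then have s1: "real r * b ^ (r - 1) \<le> (\<Sum>i<r. b ^ (r - Suc i) * a ^ i)"
    and s2: "(\<Sum>i<r. b ^ (r - Suc i) * a ^ i) \<le> real r * a ^ (r - 1)"
    using sum_mono[of "{..<r}" "\<lambda>_. b ^ (r - 1)"] sum_mono[of "{..<r}" _ "\<lambda>_. a ^ (r - 1)"]
    by auto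
  have ab: "0 \<le> a - b" using assms by simp
  show "real r * (a - b) * b ^ (r - 1) \<le> a ^ r - b ^ r"
    and "a ^ r - b ^ r \<le> real r * (a - b) * a ^ (r - 1)"
    unfolding eq using mult_left_mono[OF s1 ab] mult_left_mono[OF s2 ab]
    by (simp_all add: algebra_simps)
qed

lemma power_diff_linearization_bounds:
  fixes x h :: real
  assumes "0 \<le> h" "h \<le> x"
  shows "0 \<le> real k * x ^ (k - 1) * h - (x ^ k - (x - h) ^ k)"
    and "real k * x ^ (k - 1) * h - (x ^ k - (x - h) ^ k) \<le> real k ^ 2 * x ^ (k - 2) * h ^ 2"
proof -
  have lo: "real k * h * (x - h) ^ (k - 1) \<le> x ^ k - (x - h) ^ k"
   and up: "x ^ k - (x - h) ^ k \<le> real k * h * x ^ (k - 1)"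
    using power_diff_bounds[of "x - h" x k] assms by auto
  have "x ^ (k - 1) - (x - h) ^ (k - 1) \<le> real (k - 1) * h * x ^ (k - 2)"
    using power_diff_bounds(2)[of "x - h" x "k - 1"] assms by (simp add: numeral_2_eq_2)
  also have "\<dots> \<le> real k * h * x ^ (k - 2)"
    using assms by (intro mult_right_mono) auto
  finally have up': "x ^ (k - 1) - (x - h) ^ (k - 1) \<le> real k * h * x ^ (k - 2)" .
  show "0 \<le> real k * x ^ (k - 1) * h - (x ^ k - (x - h) ^ k)"
    using up by (simp add: mult_ac)
  have "real k * x ^ (k - 1) * h - (x ^ k - (x - h) ^ k)
        \<le> real k * h * (x ^ (k - 1) - (x - h) ^ (k - 1))"
    using lo by (simp add: algebra_simps)
  also have "\<dots> \<le> real k * h * (real k * h * x ^ (k - 2))"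
    using up' assms by (intro mult_left_mono) auto
  finally show "real k * x ^ (k - 1) * h - (x ^ k - (x - h) ^ k) \<le> real k ^ 2 * x ^ (k - 2) * h ^ 2"
    by (simp add: power2_eq_square algebra_simps)
qed

lemma sum_inverse_squares_le_2: "(\<Sum>j<n. 1 / real (Suc j) ^ 2) \<le> 2"
proof -
  have bound: "(\<Sum>j<n. 1 / real (Suc j) ^ 2) \<le> 2 - 1 / real n" if "n \<ge> 1" for n
    using that
  proof (induction n rule: nat_induct_at_least)
    case (Suc n)
    have "1 / real (Suc n) ^ 2 \<le> 1 / (real n * real (Suc n))"
      using Suc.hyps by (intro divide_left_mono) (auto simp: power2_eq_square)
    also have "\<dots> = 1 / real n - 1 / real (Suc n)"
      using Suc.hyps by (simp add: field_simps)
    finally show ?case using Suc.IH by simp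
  qed simp
  show ?thesis
  proof (cases "n = 0")
    case False
    have "0 \<le> 1 / real n" by simp
    then show ?thesis using bound[of n] False by linarith
  qed simp
qed

fun iterated_harm :: "nat \<Rightarrow> nat \<Rightarrow> real" where
  "iterated_harm 0 n = 1"
| "iterated_harm (Suc k) n = (\<Sum>j<n. iterated_harm k (Suc j) / real (Suc j))"

lemma iterated_harm_1: "iterated_harm 1 n = harm n"
  by (simp add: harm_altdef inverse_eq_divide)

lemma iterated_harm_nonneg: "iterated_harm k n \<ge> 0"
  by (induction k arbitrary: n) (auto intro!: sum_nonneg)

lemma iterated_harm_error_increment:
  fixes k j :: nat and b B :: real
  defines "E \<equiv> \<lambda>i. iterated_harm (Suc k) i - harm i ^ Suc k / fact (Suc k)"
  assumes b: "\<bar>iterated_harm k (Suc j) - harm (Suc j) ^ k / fact k\<bar> \<le> b"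
    and B: "harm (Suc j) \<le> B"
  shows "\<bar>E (Suc j) - E j\<bar> \<le> b / real (Suc j) + real (Suc k) ^ 2 * B ^ (k - 1) / real (Suc j) ^ 2"
proof -
  define K where "K = Suc k"
  define x :: real where "x = harm (Suc j)"
  define h where "h = 1 / real (Suc j)"
  have hx: "harm j = x - h" by (simp add: x_def h_def harm_Suc divide_inverse)
  have h: "0 \<le> h" "h \<le> x"
    by (auto simp: x_def h_def harm_Suc harm_nonneg divide_inverse)
  have "E (Suc j) - E j = iterated_harm k (Suc j) * h - x ^ K / fact K + (x - h) ^ K / fact K"
    by (simp add: E_def K_def hx h_def x_def[symmetric] divide_inverse)
  also have "\<dots> = (iterated_harm k (Suc j) - x ^ k / fact k) * h
             + (real K * x ^ (K - 1) * h - (x ^ K - (x - h) ^ K)) / fact K"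
  proof -
    have "x ^ k / fact k = real K * x ^ k / fact K" "K - 1 = k"
      by (simp_all add: K_def)
    then show ?thesis by (simp add: field_simps)
  qed
  finally have diff: "E (Suc j) - E j = (iterated_harm k (Suc j) - x ^ k / fact k) * h
             + (real K * x ^ (K - 1) * h - (x ^ K - (x - h) ^ K)) / fact K" .
  have t1: "\<bar>(iterated_harm k (Suc j) - x ^ k / fact k) * h\<bar> \<le> b * h"
    using b h by (simp add: abs_mult x_def mult_right_mono)
  note lin = power_diff_linearization_bounds[OF h, of K]
  have "\<bar>(real K * x ^ (K - 1) * h - (x ^ K - (x - h) ^ K)) / fact K\<bar>
        \<le> real K * x ^ (K - 1) * h - (x ^ K - (x - h) ^ K)"
    using lin(1) mult_left_mono[OF _ lin(1), of 1 "fact K"] by (simp add: divide_le_eq)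
  also have "\<dots> \<le> real K ^ 2 * x ^ (K - 2) * h ^ 2"
    by (rule lin(2))
  also have "\<dots> \<le> real K ^ 2 * B ^ (k - 1) * h ^ 2"
    using B h by (auto simp: K_def x_def intro!: mult_right_mono mult_left_mono power_mono)
  finally have t2: "\<bar>(real K * x ^ (K - 1) * h - (x ^ K - (x - h) ^ K)) / fact K\<bar>
                    \<le> real K ^ 2 * B ^ (k - 1) * h ^ 2" .
  show ?thesis
    using order_trans[OF abs_triangle_ineq add_mono[OF t1 t2]]
    unfolding diff by (simp add: K_def h_def power_divide)
qed

lemma iterated_harm_Suc_error:
  assumes b: "\<And>j. j \<le> n \<Longrightarrow> \<bar>iterated_harm k j - harm j ^ k / fact k\<bar> \<le> b"
  shows "\<bar>iterated_harm (Suc k) n - harm n ^ Suc k / fact (Suc k)\<bar>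
          \<le> b * harm n + 2 * real (Suc k) ^ 2 * (1 + harm n) ^ (k - 1)"
proof -
  define E where "E i = iterated_harm (Suc k) i - harm i ^ Suc k / fact (Suc k)" for i
  define D where "D = real (Suc k) ^ 2 * (1 + harm n) ^ (k - 1)"
  have "harm (Suc j) \<le> (1 + harm n :: real)" if "j < n" for j
    using harm_mono[of "Suc j" n, where 'a=real] that by simp
  then have step: "\<bar>E (Suc j) - E j\<bar> \<le> b * (1 / real (Suc j)) + D * (1 / real (Suc j) ^ 2)"
    if "j < n" for j
    using iterated_harm_error_increment[OF b, of j "1 + harm n"] that unfolding E_def D_def
    by simp
  have "E n = (\<Sum>j<n. E (Suc j) - E j)"
    using sum_lessThan_telescope[of E n] by (simp add: E_def harm_expand(1))
  then have "\<bar>E n\<bar> \<le> (\<Sum>j<n. b * (1 / real (Suc j)) + D * (1 / real (Suc j) ^ 2))"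
    using step by (auto intro!: order_trans[OF sum_abs] sum_mono)
  also have "\<dots> = b * harm n + D * (\<Sum>j<n. 1 / real (Suc j) ^ 2)"
    by (simp add: sum.distrib sum_distrib_left harm_altdef inverse_eq_divide)
  also have "\<dots> \<le> b * harm n + D * 2"
    using sum_inverse_squares_le_2 by (intro add_left_mono mult_left_mono) (auto simp: D_def harm_nonneg)
  finally show ?thesis by (simp add: E_def D_def mult_ac)
qed

lemma iterated_harm_error_step:
  assumes k: "k \<ge> 2" and C: "C \<ge> 0"
    and err: "\<And>j. \<bar>iterated_harm k j - harm j ^ k / fact k\<bar> \<le> C * (1 + harm j) ^ (k - 2)"
  shows "\<bar>iterated_harm (Suc k) n - harm n ^ Suc k / fact (Suc k)\<bar>
         \<le> (C + 2 * real (Suc k) ^ 2) * (1 + harm n) ^ (k - 1)"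
proof -
  have H0: "(0::real) \<le> harm n" by (rule harm_nonneg)
  have "\<bar>iterated_harm k j - harm j ^ k / fact k\<bar> \<le> C * (1 + harm n) ^ (k - 2)" if "j \<le> n" for j
  proof -
    have "(1 + harm j) ^ (k - 2) \<le> (1 + harm n :: real) ^ (k - 2)"
      using harm_mono[OF that, where 'a=real] harm_nonneg[of j, where 'a=real]
      by (intro power_mono) auto
    then show ?thesis using err[of j] C by (smt (verit) mult_left_mono)
  qed
  then have "\<bar>iterated_harm (Suc k) n - harm n ^ Suc k / fact (Suc k)\<bar>
        \<le> C * (1 + harm n) ^ (k - 2) * harm n + 2 * real (Suc k) ^ 2 * (1 + harm n) ^ (k - 1)"
    by (intro iterated_harm_Suc_error)
  also have "C * (1 + harm n) ^ (k - 2) * harm n \<le> C * (1 + harm n) ^ (k - 1)"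
  proof -
    have "k - 1 = Suc (k - 2)" using k by simp
    moreover have "(1 + harm n) ^ (k - 2) * harm n \<le> (1 + harm n) ^ (k - 2) * (1 + harm n :: real)"
      using H0 by (intro mult_left_mono zero_le_power) auto
    ultimately show ?thesis using C
      by (simp add: mult.assoc mult.commute[of "1 + harm n"] mult_left_mono)
  qed
  finally show ?thesis by (simp add: algebra_simps)
qed

lemma iterated_harm_error_bound:
  assumes "k \<ge> 2"
  obtains C where "\<And>n. \<bar>iterated_harm k n - harm n ^ k / fact k\<bar> \<le> C * (1 + harm n) ^ (k - 2)"
proof -
  have "\<exists>C\<ge>0. \<forall>n. \<bar>iterated_harm k n - harm n ^ k / fact k\<bar> \<le> C * (1 + harm n) ^ (k - 2)"
    using assms
  proof (induction k rule: nat_induct_at_least)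
    case base
    have "\<bar>iterated_harm (Suc 1) n - harm n ^ Suc 1 / fact (Suc 1)\<bar>
            \<le> 0 * harm n + 2 * real (Suc 1) ^ 2 * (1 + harm n) ^ (1 - 1)" for n
      by (rule iterated_harm_Suc_error) (auto simp: iterated_harm_1[simplified])
    then show ?case by (intro exI[of _ 8]) (auto simp: numeral_2_eq_2)
  next
    case (Suc k)
    then obtain C where "C \<ge> 0"
      "\<And>n. \<bar>iterated_harm k n - harm n ^ k / fact k\<bar> \<le> C * (1 + harm n) ^ (k - 2)"
      by auto
    from iterated_harm_error_step[OF Suc.hyps this] \<open>C \<ge> 0\<close> show ?case
      by (intro exI[of _ "C + 2 * real (Suc k) ^ 2"]) auto
  qed
  then show ?thesis using that by blast
qed

lemma one_smallo_ln: "(\<lambda>_. 1) \<in> o(\<lambda>n. ln (real n))"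
  by real_asymp

lemma ln_power_smallo_ln_power: "i < j \<Longrightarrow> (\<lambda>n. ln (real n) ^ i) \<in> o(\<lambda>n. ln (real n) ^ j)"
  by (rule landau_o.small_power_increasing[OF one_smallo_ln])

lemma one_plus_harm_bigo_ln: "(\<lambda>n. 1 + harm n :: real) \<in> O(\<lambda>n. ln (real n))"
proof -
  have one: "(\<lambda>_. 1) \<in> O(\<lambda>n. ln (real n))"
    by (rule landau_o.small_imp_big[OF one_smallo_ln])
  have "(\<lambda>n. harm n - ln (real n) :: real) \<in> O(\<lambda>_. 1)"
    using euler_mascheroni_LIMSEQ by (intro bigoI_tendsto) auto
  then have "(\<lambda>n. harm n - ln (real n) :: real) \<in> O(\<lambda>n. ln (real n))"
    using one by (rule landau_o.big_trans)
  from sum_in_bigo(1)[OF sum_in_bigo(1)[OF one this] landau_o.big_refl]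
  show ?thesis by simp
qed

lemma iterated_harm_asymp:
  assumes "k \<ge> 2"
  shows "(\<lambda>n. iterated_harm k n - harm n ^ k / fact k) \<in> o(\<lambda>n. ln (real n) ^ (k - 1))"
proof -
  obtain C where C: "\<And>n. \<bar>iterated_harm k n - harm n ^ k / fact k\<bar> \<le> C * (1 + harm n) ^ (k - 2)"
    using iterated_harm_error_bound[OF assms] by blast
  have "(\<lambda>n. iterated_harm k n - harm n ^ k / fact k) \<in> O(\<lambda>n. (1 + harm n) ^ (k - 2))"
    using C by (intro bigoI[of _ C]) (auto simp: abs_mult harm_nonneg)
  also have "(\<lambda>n. (1 + harm n) ^ (k - 2)) \<in> O(\<lambda>n. ln (real n) ^ (k - 2))"
    by (rule landau_o.big_power[OF one_plus_harm_bigo_ln])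
  also have "(\<lambda>n. ln (real n) ^ (k - 2)) \<in> o(\<lambda>n. ln (real n) ^ (k - 1))"
    using assms by (intro ln_power_smallo_ln_power) auto
  finally show ?thesis .
qed

lemma ln_eventually_pos: "\<forall>\<^sub>F n in sequentially. ln (real n) > 0"
  by real_asymp

lemma harm_div_ln_tendsto: "(\<lambda>n. harm n / ln (real n)) \<longlonglongrightarrow> (1 :: real)"
proof -
  have "(\<lambda>n. 1 / ln (real n)) \<longlonglongrightarrow> 0"
    by real_asymp
  then have "(\<lambda>n. 1 + (harm n - ln (real n)) * (1 / ln (real n))) \<longlonglongrightarrow> (1 + euler_mascheroni * 0 :: real)"
    by (intro tendsto_intros euler_mascheroni_LIMSEQ)
  moreover have "\<forall>\<^sub>F n in sequentially. 1 + (harm n - ln (real n)) * (1 / ln (real n)) = harm n / ln (real n)"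
    using ln_eventually_pos by eventually_elim (simp add: field_simps)
  ultimately show ?thesis
    by (simp add: tendsto_cong)
qed

lemma harm_power_diff_tendsto:
  "(\<lambda>n. (harm n ^ k - ln (real n) ^ k) / ln (real n) ^ (k - 1)) \<longlonglongrightarrow> real k * euler_mascheroni"
proof -
  have "(\<lambda>n. (harm n - ln (real n)) * (\<Sum>i<k. (harm n / ln (real n)) ^ i))
          \<longlonglongrightarrow> euler_mascheroni * (\<Sum>i<k. 1 ^ i)"
    by (intro tendsto_intros euler_mascheroni_LIMSEQ harm_div_ln_tendsto)
  moreover have "\<forall>\<^sub>F n in sequentially. (harm n - ln (real n)) * (\<Sum>i<k. (harm n / ln (real n)) ^ i)
                   = (harm n ^ k - ln (real n) ^ k) / ln (real n) ^ (k - 1)"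
    using ln_eventually_pos
  proof eventually_elim
    case (elim n)
    have "(\<Sum>i<k. (harm n / ln (real n)) ^ i)
          = (\<Sum>i<k. ln (real n) ^ (k - Suc i) * harm n ^ i) / ln (real n) ^ (k - 1)"
      unfolding sum_divide_distrib
    proof (intro sum.cong refl)
      fix i assume "i \<in> {..<k}"
      then have "k - 1 = (k - Suc i) + i" by auto
      then show "(harm n / ln (real n)) ^ i = ln (real n) ^ (k - Suc i) * harm n ^ i / ln (real n) ^ (k - 1)"
        using elim by (simp add: power_add power_divide)
    qed
    then show ?case by (simp add: power_diff_sumr2)
  qed
  ultimately show ?thesis
    by (simp add: tendsto_cong mult.commute)
qed

lemma harm_power_asymp:
  assumes "k \<ge> 1"
  shows "(\<lambda>n. harm n ^ k / fact k - ln (real n) ^ k / fact k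
                - euler_mascheroni * ln (real n) ^ (k - 1) / fact (k - 1))
           \<in> o(\<lambda>n. ln (real n) ^ (k - 1))"
proof (rule smalloI_tendsto)
  show "\<forall>\<^sub>F n in sequentially. ln (real n) ^ (k - 1) \<noteq> 0"
    using ln_eventually_pos by eventually_elim simp
  have "(\<lambda>n. ((harm n ^ k - ln (real n) ^ k) / ln (real n) ^ (k - 1) - real k * euler_mascheroni) / fact k)
          \<longlonglongrightarrow> (real k * euler_mascheroni - real k * euler_mascheroni) / fact k"
    by (intro tendsto_intros harm_power_diff_tendsto) simp
  then have "(\<lambda>n. ((harm n ^ k - ln (real n) ^ k) / ln (real n) ^ (k - 1) - real k * euler_mascheroni) / fact k)
          \<longlonglongrightarrow> 0"
    by (simp only: diff_self div_0)
  moreover have "\<forall>\<^sub>F n in sequentially.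
          ((harm n ^ k - ln (real n) ^ k) / ln (real n) ^ (k - 1) - real k * euler_mascheroni) / fact k
        = (harm n ^ k / fact k - ln (real n) ^ k / fact k
            - euler_mascheroni * ln (real n) ^ (k - 1) / fact (k - 1)) / ln (real n) ^ (k - 1)"
    using ln_eventually_pos
  proof eventually_elim
    case (elim n)
    have "((a - b) / P - real k * g) / (real k * F) = (a / (real k * F) - b / (real k * F) - g * P / F) / P"
      if "P \<noteq> 0" "F \<noteq> 0" for a b g P F :: real
      using that assms by (simp add: field_simps)
    then show ?case
      using elim assms fact_reduce[of k, where 'a=real] by simp
  qed
  ultimately show "(\<lambda>n. (harm n ^ k / fact k - ln (real n) ^ k / fact k
                - euler_mascheroni * ln (real n) ^ (k - 1) / fact (k - 1)) / ln (real n) ^ (k - 1))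
          \<longlonglongrightarrow> 0"
    by (rule Lim_transform_eventually)
qed

lemma asymp_near_iterated_harm:
  fixes f :: "nat \<Rightarrow> real"
  assumes "k \<ge> 3"
    and "\<forall>\<^sub>F n in sequentially. \<bar>f n - iterated_harm k n\<bar> \<le> 1 + harm n"
  shows "(\<lambda>n. f n - ln (real n) ^ k / fact k - euler_mascheroni * ln (real n) ^ (k - 1) / fact (k - 1))
           \<in> o(\<lambda>n. ln (real n) ^ (k - 1))"
proof -
  have "(\<lambda>n. f n - iterated_harm k n) \<in> O(\<lambda>n. 1 + harm n)"
    using assms(2) by (intro bigoI[of _ 1]) (auto elim!: eventually_mono)
  also have "(\<lambda>n. 1 + harm n) \<in> O(\<lambda>n. ln (real n) ^ 1)"
    using one_plus_harm_bigo_ln by simp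
  also have "(\<lambda>n. ln (real n) ^ 1) \<in> o(\<lambda>n. ln (real n) ^ (k - 1))"
    using assms(1) by (intro ln_power_smallo_ln_power) auto
  finally have "(\<lambda>n. f n - iterated_harm k n) \<in> o(\<lambda>n. ln (real n) ^ (k - 1))" .
  from sum_in_smallo(1)[OF sum_in_smallo(1)[OF this iterated_harm_asymp] harm_power_asymp]
  show ?thesis using assms(1) by (simp add: algebra_simps)
qed

section \<open>Nonnegative integrals and sampling with replacement\<close>

lemma nn_integral_FTC_Icc_if:
  fixes f F :: "real \<Rightarrow> real"
  assumes "f \<in> borel_measurable borel" "a \<le> b"
    and "\<And>t. t \<in> {a..b} \<Longrightarrow> (F has_real_derivative f t) (at t)"
    and "\<And>t. t \<in> {a..b} \<Longrightarrow> 0 \<le> f t"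
  shows "(\<integral>\<^sup>+t. ennreal (if a \<le> t \<and> t \<le> b then f t else 0) \<partial>lborel) = ennreal (F b - F a)"
proof -
  have "(\<integral>\<^sup>+t. ennreal (if a \<le> t \<and> t \<le> b then f t else 0) \<partial>lborel)
        = (\<integral>\<^sup>+t. ennreal (f t) * indicator {a..b} t \<partial>lborel)"
    by (intro nn_integral_cong) (auto simp: indicator_def)
  also have "\<dots> = ennreal (F b - F a)"
    using assms by (intro nn_integral_FTC_Icc) auto
  finally show ?thesis .
qed

lemma enn2real_bounds:
  fixes X :: ennreal and a b c :: real
  assumes "X \<le> ennreal c + 1" "ennreal a \<le> X + ennreal b" "0 \<le> b" "0 \<le> c"
  shows "a - b \<le> enn2real X" "enn2real X \<le> c + 1"
proof -
  from assms(1,4) have le: "X \<le> ennreal (c + 1)" by (simp add: ennreal_plus)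
  then have "X \<noteq> \<top>" by (auto simp: top_unique)
  then obtain v where v: "X = ennreal v" "0 \<le> v"
    by (cases X rule: ennreal_cases) auto
  with le assms(4) have "v \<le> c + 1" by (simp add: ennreal_le_iff del: ennreal_plus)
  then show "enn2real X \<le> c + 1" using v by simp
  from assms(2,3) v have "ennreal a \<le> ennreal (v + b)" by (simp add: ennreal_plus)
  then have "a \<le> v + b" using v assms(3) by (simp add: ennreal_le_iff del: ennreal_plus)
  then show "a - b \<le> enn2real X" using v by simp
qed

lemma emeasure_replicate_pmf_not_in_set:
  "emeasure (measure_pmf (replicate_pmf n M)) {xs. j \<notin> set xs} = ennreal ((1 - pmf M j) ^ n)"
proof (induction n)
  case 0
  then show ?case by (simp add: indicator_def)
next
  case (Suc n)
  have w: "pmf M j \<le> 1" by (rule pmf_le_1)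
  have "emeasure (measure_pmf (replicate_pmf (Suc n) M)) {xs. j \<notin> set xs}
        = (\<integral>\<^sup>+x. (\<integral>\<^sup>+xs. indicator {xs. j \<notin> set xs} (x # xs) \<partial>replicate_pmf n M) \<partial>M)"
    by simp
  also have "\<dots> = (\<integral>\<^sup>+x. indicator (- {j}) x * emeasure (measure_pmf (replicate_pmf n M)) {xs. j \<notin> set xs} \<partial>M)"
  proof (intro nn_integral_cong)
    fix x
    have "(\<lambda>xs. indicator {xs. j \<notin> set xs} (x # xs) :: ennreal)
          = (\<lambda>xs. indicator (- {j}) x * indicator {xs. j \<notin> set xs} xs)"
      by (auto simp: indicator_def)
    then show "(\<integral>\<^sup>+xs. indicator {xs. j \<notin> set xs} (x # xs) \<partial>replicate_pmf n M)
               = indicator (- {j}) x * emeasure (measure_pmf (replicate_pmf n M)) {xs. j \<notin> set xs}"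
      by (simp add: nn_integral_cmult)
  qed
  also have "\<dots> = emeasure (measure_pmf M) (- {j}) * ennreal ((1 - pmf M j) ^ n)"
    unfolding Suc by (simp add: nn_integral_multc)
  also have "emeasure (measure_pmf M) (- {j}) = ennreal (1 - pmf M j)"
  proof -
    have "measure_pmf.prob M (- {j}) = 1 - measure_pmf.prob M {j}"
      using measure_pmf.prob_compl[of "{j}" M] by (simp add: Compl_eq_Diff_UNIV)
    then show ?thesis by (simp add: measure_pmf.emeasure_eq_measure measure_pmf_single)
  qed
  finally show ?case using w by (simp add: ennreal_mult[symmetric] pmf_nonneg)
qed

lemma suminf_indicator_finite:
  assumes "finite (S :: nat set)"
  shows "(\<Sum>j. (indicator S j :: ennreal)) = of_nat (card S)"
proof -
  have "(\<Sum>j. (indicator S j :: ennreal)) = (\<Sum>j\<in>S. indicator S j)"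
    by (rule suminf_finite[OF assms]) auto
  also have "\<dots> = (\<Sum>j\<in>S. 1)" by (intro sum.cong) auto
  finally show ?thesis by simp
qed

lemma emeasure_replicate_pmf_in_set:
  "emeasure (measure_pmf (replicate_pmf n M)) {xs. j \<in> set xs} = ennreal (1 - (1 - pmf M j) ^ n)"
proof -
  have "measure_pmf.prob (replicate_pmf n M) {xs. j \<in> set xs}
        = 1 - measure_pmf.prob (replicate_pmf n M) {xs. j \<notin> set xs}"
  proof -
    have "{xs. j \<in> set xs} = UNIV - {xs. j \<notin> set xs}" by auto
    then show ?thesis using measure_pmf.prob_compl[of "{xs. j \<notin> set xs}" "replicate_pmf n M"] by simp
  qed
  moreover have "measure_pmf.prob (replicate_pmf n M) {xs. j \<notin> set xs} = (1 - pmf M j) ^ n"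
    using emeasure_replicate_pmf_not_in_set[of n M j] pmf_le_1[of M j]
    by (simp add: measure_pmf.emeasure_eq_measure)
  ultimately show ?thesis by (simp add: measure_pmf.emeasure_eq_measure)
qed

lemma nn_integral_card_set_replicate_pmf:
  fixes M :: "nat pmf"
  shows "(\<integral>\<^sup>+xs. ennreal (real (card (set xs))) \<partial>replicate_pmf n M) = (\<Sum>j. ennreal (1 - (1 - pmf M j) ^ n))"
proof -
  have "(\<integral>\<^sup>+xs. ennreal (real (card (set xs))) \<partial>replicate_pmf n M)
        = (\<integral>\<^sup>+xs. (\<Sum>j. indicator {xs. j \<in> set xs} xs) \<partial>replicate_pmf n M)"
  proof (intro nn_integral_cong)
    fix xs :: "nat list"
    have "(\<Sum>j. indicator {xs. j \<in> set xs} xs :: ennreal) = (\<Sum>j. indicator (set xs) j)"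
      by (simp add: indicator_def)
    also have "\<dots> = of_nat (card (set xs))" by (rule suminf_indicator_finite) simp
    finally show "ennreal (real (card (set xs))) = (\<Sum>j. indicator {xs. j \<in> set xs} xs)"
      by (simp add: ennreal_of_nat_eq_real_of_nat)
  qed
  also have "\<dots> = (\<Sum>j. \<integral>\<^sup>+xs. indicator {xs. j \<in> set xs} xs \<partial>replicate_pmf n M)"
    by (rule nn_integral_suminf) simp
  also have "\<dots> = (\<Sum>j. ennreal (1 - (1 - pmf M j) ^ n))"
    by (simp add: emeasure_replicate_pmf_in_set)
  finally show ?thesis .
qed

lemma nn_integral_card_set_replicate_pmf_le:
  "(\<integral>\<^sup>+xs. ennreal (real (card (set xs))) \<partial>replicate_pmf n M) \<le> of_nat n"
proof -
  have "(\<integral>\<^sup>+xs. ennreal (real (card (set xs))) \<partial>replicate_pmf n M) \<le> (\<integral>\<^sup>+xs. of_nat n \<partial>replicate_pmf n M)"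
  proof (intro nn_integral_mono_AE, subst AE_measure_pmf_iff, intro ballI)
    fix xs assume "xs \<in> set_pmf (replicate_pmf n M)"
    then have "card (set xs) \<le> n" using card_length[of xs] by (simp add: set_replicate_pmf)
    then show "ennreal (real (card (set xs))) \<le> of_nat n"
      by (simp add: ennreal_of_nat_eq_real_of_nat)
  qed
  then show ?thesis by (simp add: measure_pmf.emeasure_space_1)
qed

section \<open>The mixing density\<close>

definition neg_ln :: "real \<Rightarrow> real" where "neg_ln y = - ln y"

lemma neg_ln_nonneg: "0 < y \<Longrightarrow> y \<le> 1 \<Longrightarrow> neg_ln y \<ge> 0"
  by (simp add: neg_ln_def)

lemma neg_ln_1 [simp]: "neg_ln 1 = 0"
  by (simp add: neg_ln_def)

lemma neg_ln_measurable [measurable]: "neg_ln \<in> borel_measurable borel"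
  unfolding neg_ln_def by measurable

lemma pi_dens_nonneg: "0 < p \<Longrightarrow> p \<le> 1 \<Longrightarrow> pi_dens m p \<ge> 0"
  by (simp add: pi_dens_def)

lemma pi_dens_measurable [measurable]: "pi_dens m \<in> borel_measurable borel"
  unfolding pi_dens_def by measurable

lemma pi_dens_eq: "pi_dens m p = neg_ln p ^ m / fact m"
  by (simp add: pi_dens_def neg_ln_def)

lemma neg_ln_power_has_derivative:
  assumes "x > 0"
  shows "((\<lambda>t. neg_ln t ^ Suc k / fact (Suc k)) has_real_derivative - (neg_ln x ^ k / fact k / x)) (at x)"
proof -
  have "(neg_ln has_real_derivative - (1 / x)) (at x)"
    unfolding neg_ln_def using assms by (auto intro!: derivative_eq_intros)
  from DERIV_cdivide[OF DERIV_power[OF this, of "Suc k"], of "fact (Suc k)"]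
  show ?thesis by (simp add: field_simps del: of_nat_Suc)
qed

lemma neg_ln_power_integral:
  assumes "0 < y" "y \<le> 1"
  shows "(\<integral>\<^sup>+t. ennreal (if y \<le> t \<and> t \<le> 1 then neg_ln t ^ k / fact k / t else 0) \<partial>lborel)
         = ennreal (neg_ln y ^ Suc k / fact (Suc k))"
proof -
  have "(\<integral>\<^sup>+t. ennreal (if y \<le> t \<and> t \<le> 1 then neg_ln t ^ k / fact k / t else 0) \<partial>lborel)
        = ennreal (- (neg_ln 1 ^ Suc k / fact (Suc k)) - - (neg_ln y ^ Suc k / fact (Suc k)))"
  proof (rule nn_integral_FTC_Icc_if)
    fix t assume "t \<in> {y..1}"
    then have t: "0 < t" "t \<le> 1" using assms by auto
    show "((\<lambda>t. - (neg_ln t ^ Suc k / fact (Suc k))) has_real_derivative neg_ln t ^ k / fact k / t) (at t)"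
      using DERIV_minus[OF neg_ln_power_has_derivative[OF t(1), of k]] by simp
    show "0 \<le> neg_ln t ^ k / fact k / t"
      using t by (intro divide_nonneg_nonneg zero_le_power neg_ln_nonneg) auto
  qed (use assms in auto)
  then show ?thesis by simp
qed

definition pi_cdf :: "nat \<Rightarrow> real \<Rightarrow> real" where
  "pi_cdf m p = p * (\<Sum>i\<le>m. neg_ln p ^ i / fact i)"

lemma pi_cdf_has_derivative: "x > 0 \<Longrightarrow> (pi_cdf m has_real_derivative pi_dens m x) (at x)"
proof (induction m)
  case 0
  then show ?case unfolding pi_cdf_def pi_dens_def by (auto intro!: derivative_eq_intros)
next
  case (Suc m)
  have "pi_cdf (Suc m) = (\<lambda>p. pi_cdf m p + p * (neg_ln p ^ Suc m / fact (Suc m)))"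
    by (auto simp: pi_cdf_def algebra_simps)
  moreover have "((\<lambda>p. pi_cdf m p + p * (neg_ln p ^ Suc m / fact (Suc m))) has_real_derivative
        pi_dens m x + (1 * (neg_ln x ^ Suc m / fact (Suc m)) + - (neg_ln x ^ m / fact m / x) * x)) (at x)"
    by (intro DERIV_add DERIV_mult DERIV_ident Suc neg_ln_power_has_derivative)
  ultimately show ?case
    using Suc.prems by (simp add: pi_dens_eq)
qed

lemma pi_dens_integral_le_1:
  assumes "0 < x" "x \<le> 1"
  shows "(\<integral>\<^sup>+p. ennreal (if x \<le> p \<and> p \<le> 1 then pi_dens m p else 0) \<partial>lborel) \<le> 1"
proof -
  have "(\<integral>\<^sup>+p. ennreal (if x \<le> p \<and> p \<le> 1 then pi_dens m p else 0) \<partial>lborel)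
        = ennreal (pi_cdf m 1 - pi_cdf m x)"
    using assms by (intro nn_integral_FTC_Icc_if pi_cdf_has_derivative pi_dens_nonneg) auto
  moreover have "pi_cdf m 1 = 1"
    by (simp add: pi_cdf_def neg_ln_def power_0_left sum.atMost_shift)
  moreover have "pi_cdf m x \<ge> 0"
    unfolding pi_cdf_def using assms by (intro mult_nonneg_nonneg sum_nonneg) (auto simp: neg_ln_def)
  ultimately show ?thesis by simp
qed

lemma log_ratio_antiderivative:
  fixes m :: nat
  assumes "0 < t" "0 < x"
  defines "F \<equiv> \<lambda>p. real (Suc m) * (neg_ln p ^ Suc (Suc m) / fact (Suc (Suc m)))
                    - neg_ln x * (neg_ln p ^ Suc m / fact (Suc m))"
  shows "(F has_real_derivative ln (t / x) / t * pi_dens m t) (at t)"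
proof -
  have "(F has_real_derivative real (Suc m) * - (neg_ln t ^ Suc m / fact (Suc m) / t)
                             - neg_ln x * - (neg_ln t ^ m / fact m / t)) (at t)"
    unfolding F_def using assms by (intro DERIV_diff DERIV_cmult neg_ln_power_has_derivative)
  moreover have "real (Suc m) * - (neg_ln t ^ Suc m / fact (Suc m) / t)
                             - neg_ln x * - (neg_ln t ^ m / fact m / t) = ln (t / x) / t * pi_dens m t"
  proof -
    have lnq: "ln (t / x) = neg_ln x - neg_ln t"
      using assms by (simp add: neg_ln_def ln_div)
    show ?thesis unfolding pi_dens_eq lnq using assms by (simp add: field_simps del: of_nat_Suc)
  qed
  ultimately show ?thesis by simp
qed

lemma pi_dens_log_ratio_integral:
  assumes "0 < x" "x \<le> 1"
  shows "(\<integral>\<^sup>+p. ennreal (if x \<le> p \<and> p \<le> 1 then ln (p / x) / p * pi_dens m p else 0) \<partial>lborel)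
         = ennreal (neg_ln x ^ (m + 2) / fact (m + 2))"
proof -
  have "(\<integral>\<^sup>+p. ennreal (if x \<le> p \<and> p \<le> 1 then ln (p / x) / p * pi_dens m p else 0) \<partial>lborel)
    = ennreal ((real (Suc m) * (neg_ln 1 ^ Suc (Suc m) / fact (Suc (Suc m)))
                 - neg_ln x * (neg_ln 1 ^ Suc m / fact (Suc m)))
               - (real (Suc m) * (neg_ln x ^ Suc (Suc m) / fact (Suc (Suc m)))
                 - neg_ln x * (neg_ln x ^ Suc m / fact (Suc m))))"
    using assms
    by (intro nn_integral_FTC_Icc_if log_ratio_antiderivative)
       (auto intro!: mult_nonneg_nonneg divide_nonneg_nonneg pi_dens_nonneg)
  also have "\<dots> = ennreal (neg_ln x ^ (m + 2) / fact (m + 2))"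
  proof -
    have gen: "L * (L * L ^ m / (a * F)) - a * (L * (L * L ^ m) / ((a + 1) * (a * F)))
          = L * (L * L ^ m) / ((a + 1) * (a * F))" if "a > 0" "F > 0" for a F L :: real
    proof -
      have "L * (L * L ^ m / (a * F)) = (a + 1) * (L * (L * L ^ m)) / ((a + 1) * (a * F))"
        using that by simp
      then show ?thesis by (simp add: diff_divide_distrib[symmetric] algebra_simps)
    qed
    have Suc2: "real (Suc (Suc m)) = real (Suc m) + 1" by simp
    show ?thesis
      using gen[of "real (Suc m)" "fact m" "neg_ln x"]
      by (simp add: numeral_2_eq_2 mult_ac Suc2 del: of_nat_Suc)
  qed
  finally show ?thesis .
qed

section \<open>The integrated counting function\<close>

text \<open>The closed form of the number of weights \<open>p (1 - p)\<^sup>j\<^sup>-\<^sup>1 \<ge> x\<close> (see \<open>geom_weights_ge\<close>),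
  set to 0 outside \<open>0 < x \<le> p < 1\<close> (for \<open>x > p\<close> there are no such weights).\<close>

definition geom_count :: "real \<Rightarrow> real \<Rightarrow> real" where
  "geom_count p x =
     (if 0 < p \<and> p < 1 \<and> 0 < x \<and> x \<le> p then real (nat \<lfloor>ln (p / x) / - ln (1 - p)\<rfloor> + 1) else 0)"

lemma geom_count_measurable [measurable]:
  "(\<lambda>(p, x). geom_count p x) \<in> borel_measurable (lborel \<Otimes>\<^sub>M lborel)"
  unfolding geom_count_def by measurable

lemma geom_count_nonneg: "geom_count p x \<ge> 0"
  by (simp add: geom_count_def)

lemma geom_weight_ge_iff:
  fixes p x :: real
  assumes p: "0 < p" "p < 1" and x: "0 < x" "x \<le> p"
  shows "x \<le> p * (1 - p) ^ i \<longleftrightarrow> i \<le> nat \<lfloor>ln (p / x) / - ln (1 - p)\<rfloor>"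
proof -
  define z where "z = ln (p / x) / - ln (1 - p)"
  have lr: "0 < - ln (1 - p)" using p by simp
  have z0: "0 \<le> z" unfolding z_def using lr x by (intro divide_nonneg_pos) auto
  have "x \<le> p * (1 - p) ^ i \<longleftrightarrow> ln x \<le> ln (p * (1 - p) ^ i)"
    using x p by simp
  also have "\<dots> \<longleftrightarrow> real i * (- ln (1 - p)) \<le> ln (p / x)"
    using p x by (simp add: ln_mult ln_realpow ln_div algebra_simps)
  also have "\<dots> \<longleftrightarrow> real i \<le> z"
    unfolding z_def using pos_le_divide_eq[OF lr] by simp
  also have "\<dots> \<longleftrightarrow> i \<le> nat \<lfloor>z\<rfloor>"
    using z0 by (simp add: le_nat_iff le_floor_iff)
  finally show ?thesis unfolding z_def .
qed

lemma geom_weights_ge: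
  fixes p x :: real
  assumes p: "0 < p" "p < 1" and x: "0 < x"
  shows "finite {j. j \<ge> 1 \<and> p * (1 - p) ^ (j - 1) \<ge> x}"
    and "real (card {j. j \<ge> 1 \<and> p * (1 - p) ^ (j - 1) \<ge> x}) = geom_count p x"
proof -
  define K where "K = (if x \<le> p then nat \<lfloor>ln (p / x) / - ln (1 - p)\<rfloor> + 1 else 0)"
  have "{j. j \<ge> 1 \<and> p * (1 - p) ^ (j - 1) \<ge> x} = {1..K}"
  proof (cases "x \<le> p")
    case True
    show ?thesis
    proof (intro set_eqI iffI)
      fix j assume "j \<in> {j. j \<ge> 1 \<and> p * (1 - p) ^ (j - 1) \<ge> x}"
      then show "j \<in> {1..K}"
        using geom_weight_ge_iff[OF p x True, of "j - 1"] True by (auto simp: K_def)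
    next
      fix j assume "j \<in> {1..K}"
      then show "j \<in> {j. j \<ge> 1 \<and> p * (1 - p) ^ (j - 1) \<ge> x}"
        using geom_weight_ge_iff[OF p x True, of "j - 1"] True by (auto simp: K_def)
    qed
  next
    case False
    have "p * (1 - p) ^ i \<le> p" for i
      using p by (intro mult_left_le power_le_one) auto
    then show ?thesis
      using False by (auto simp: K_def not_le intro: order.strict_trans1)
  qed
  moreover have "real K = geom_count p x"
    using p x by (simp add: K_def geom_count_def)
  ultimately show "finite {j. j \<ge> 1 \<and> p * (1 - p) ^ (j - 1) \<ge> x}"
    and "real (card {j. j \<ge> 1 \<and> p * (1 - p) ^ (j - 1) \<ge> x}) = geom_count p x"
    by simp_all
qed

lemma neg_ln_one_minus_bounds:
  fixes p :: real
  assumes "0 < p" "p < 1"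
  shows "p \<le> - ln (1 - p)" "- ln (1 - p) \<le> p / (1 - p)"
proof -
  show "p \<le> - ln (1 - p)"
    using ln_one_minus_pos_upper_bound[of p] assms by simp
  have "ln (1 / (1 - p)) \<le> 1 / (1 - p) - 1"
    using assms by (intro ln_le_minus_one) auto
  then show "- ln (1 - p) \<le> p / (1 - p)"
    using assms by (simp add: ln_div field_simps)
qed

lemma geom_count_bounds:
  fixes p x :: real
  assumes p: "0 < p" "p < 1" and x: "0 < x" "x \<le> p"
  shows "geom_count p x \<le> ln (p / x) / p + 1"
    and "ln (p / x) / p - neg_ln x \<le> geom_count p x"
proof -
  define z where "z = ln (p / x) / - ln (1 - p)"
  note lr = neg_ln_one_minus_bounds[OF p]
  have q: "0 \<le> ln (p / x)" "ln (p / x) \<le> neg_ln x"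
    using p x by (simp_all add: neg_ln_def ln_div)
  have "0 \<le> z"
    unfolding z_def using q lr p by (intro divide_nonneg_pos) auto
  then have gc: "geom_count p x = real_of_int \<lfloor>z\<rfloor> + 1"
    using p x by (simp add: geom_count_def z_def)
  have "z \<le> ln (p / x) / p"
    unfolding z_def using lr q p by (intro divide_left_mono mult_pos_pos) auto
  then show "geom_count p x \<le> ln (p / x) / p + 1"
    unfolding gc by linarith
  have "ln (p / x) / p - ln (p / x) = ln (p / x) / (p / (1 - p))"
    using p by (simp add: field_simps)
  also have "\<dots> \<le> z"
    unfolding z_def using lr q p by (intro divide_left_mono mult_pos_pos) auto
  finally show "ln (p / x) / p - neg_ln x \<le> geom_count p x"
    unfolding gc using q by linarith
qed

lemma geom_count_pi_dens_nonneg: "0 \<le> geom_count p x * pi_dens m p"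
  by (cases "0 < p \<and> p < 1") (auto simp: geom_count_def intro!: mult_nonneg_nonneg pi_dens_nonneg)

lemma geom_count_pi_dens_bounds:
  fixes m :: nat and x :: real
  assumes x: "0 < x" "x < 1"
  defines "A \<equiv> \<lambda>p. if x \<le> p \<and> p \<le> 1 then ln (p / x) / p * pi_dens m p else 0"
    and "B \<equiv> \<lambda>p. if x \<le> p \<and> p \<le> 1 then pi_dens m p else 0"
  shows "0 \<le> A p" "0 \<le> B p"
    and "geom_count p x * pi_dens m p \<le> A p + B p"
    and "A p \<le> geom_count p x * pi_dens m p + neg_ln x * B p"
proof -
  show A0: "0 \<le> A p" and B0: "0 \<le> B p"
    using x by (auto simp: A_def B_def intro!: mult_nonneg_nonneg divide_nonneg_nonneg pi_dens_nonneg)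
  show "geom_count p x * pi_dens m p \<le> A p + B p"
  proof (cases "0 < p \<and> p < 1 \<and> x \<le> p")
    case True
    then have "geom_count p x \<le> ln (p / x) / p + 1" "0 \<le> pi_dens m p"
      using x geom_count_bounds(1)[of p x] pi_dens_nonneg[of p m] by auto
    then have "geom_count p x * pi_dens m p \<le> (ln (p / x) / p + 1) * pi_dens m p"
      by (rule mult_right_mono)
    then show ?thesis using True by (simp add: A_def B_def algebra_simps)
  next
    case False
    then have "geom_count p x = 0" by (auto simp: geom_count_def)
    then show ?thesis using A0 B0 by simp
  qed
  have lx: "0 \<le> neg_ln x" using x by (simp add: neg_ln_nonneg)
  consider "x \<le> p" "p < 1" | "p = 1" | "\<not> (x \<le> p \<and> p \<le> 1)" by linarith
  then show "A p \<le> geom_count p x * pi_dens m p + neg_ln x * B p"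
  proof cases
    case 1
    then have "ln (p / x) / p - neg_ln x \<le> geom_count p x" "0 \<le> pi_dens m p"
      using x geom_count_bounds(2)[of p x] pi_dens_nonneg[of p m] by auto
    then have "(ln (p / x) / p - neg_ln x) * pi_dens m p \<le> geom_count p x * pi_dens m p"
      by (rule mult_right_mono)
    then show ?thesis using 1 by (simp add: A_def B_def algebra_simps)
  next
    case 2
    then show ?thesis
      using x geom_count_pi_dens_nonneg[of p x m] by (simp add: A_def B_def neg_ln_def ln_div)
  next
    case 3
    then have "A p = 0" by (auto simp: A_def)
    then show ?thesis
      using lx B0 geom_count_pi_dens_nonneg[of p x m] by simp
  qed
qed

text \<open>The \<open>ennreal\<close>-valued integrals below represent \<open>nu_arrow\<close>, \<open>EK_cond\<close> and \<open>EK\<close>;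
  in \<open>ennreal\<close> Tonelli's theorem needs no integrability side conditions.\<close>

definition nu_ennreal :: "nat \<Rightarrow> real \<Rightarrow> ennreal" where
  "nu_ennreal m x = (\<integral>\<^sup>+p. ennreal (geom_count p x * pi_dens m p) \<partial>lborel)"

lemma nu_ennreal_measurable [measurable]: "(\<lambda>x. nu_ennreal m x) \<in> borel_measurable lborel"
  unfolding nu_ennreal_def by measurable

lemma nu_arrow_eq_enn2real:
  assumes "0 < x"
  shows "nu_arrow m x = enn2real (nu_ennreal m x)"
proof -
  have "indicator {0<..<1} p *\<^sub>R (real (card {j. j \<ge> 1 \<and> p * (1 - p) ^ (j - 1) \<ge> x}) * pi_dens m p)
        = geom_count p x * pi_dens m p" for p
  proof (cases "0 < p \<and> p < 1")
    case True
    then show ?thesis using geom_weights_ge(2)[of p x] assms by simp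
  qed (auto simp: geom_count_def)
  then have "nu_arrow m x = (\<integral>p. geom_count p x * pi_dens m p \<partial>lborel)"
    unfolding nu_arrow_def set_lebesgue_integral_def by (simp only:)
  also have "\<dots> = enn2real (nu_ennreal m x)"
    unfolding nu_ennreal_def by (intro integral_eq_nn_integral AE_I2 geom_count_pi_dens_nonneg) simp
  finally show ?thesis .
qed

lemma nu_ennreal_le:
  assumes x: "0 < x" "x < 1"
  shows "nu_ennreal m x \<le> ennreal (neg_ln x ^ (m + 2) / fact (m + 2)) + 1"
proof -
  define A where "A p = (if x \<le> p \<and> p \<le> 1 then ln (p / x) / p * pi_dens m p else 0)" for p
  define B where "B p = (if x \<le> p \<and> p \<le> 1 then pi_dens m p else 0)" for p
  note bounds = geom_count_pi_dens_bounds[OF x, where m = m, folded A_def B_def]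
  have "nu_ennreal m x \<le> (\<integral>\<^sup>+p. ennreal (A p) + ennreal (B p) \<partial>lborel)"
    unfolding nu_ennreal_def using bounds by (intro nn_integral_mono) (simp flip: ennreal_plus)
  also have "\<dots> = (\<integral>\<^sup>+p. ennreal (A p) \<partial>lborel) + (\<integral>\<^sup>+p. ennreal (B p) \<partial>lborel)"
    by (rule nn_integral_add) (simp_all add: A_def B_def)
  also have "(\<integral>\<^sup>+p. ennreal (A p) \<partial>lborel) = ennreal (neg_ln x ^ (m + 2) / fact (m + 2))"
    unfolding A_def using x by (intro pi_dens_log_ratio_integral) auto
  also have "(\<integral>\<^sup>+p. ennreal (B p) \<partial>lborel) \<le> 1"
    unfolding B_def using x by (intro pi_dens_integral_le_1) auto
  finally show ?thesis by simp
qed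

lemma nu_ennreal_ge:
  assumes x: "0 < x" "x < 1"
  shows "ennreal (neg_ln x ^ (m + 2) / fact (m + 2)) \<le> nu_ennreal m x + ennreal (neg_ln x)"
proof -
  define A where "A p = (if x \<le> p \<and> p \<le> 1 then ln (p / x) / p * pi_dens m p else 0)" for p
  define B where "B p = (if x \<le> p \<and> p \<le> 1 then pi_dens m p else 0)" for p
  have lx: "0 \<le> neg_ln x" using x by (simp add: neg_ln_nonneg)
  have "ennreal (neg_ln x ^ (m + 2) / fact (m + 2)) = (\<integral>\<^sup>+p. ennreal (A p) \<partial>lborel)"
    unfolding A_def using x by (intro pi_dens_log_ratio_integral[symmetric]) auto
  also have "\<dots> \<le> (\<integral>\<^sup>+p. ennreal (geom_count p x * pi_dens m p) + ennreal (neg_ln x) * ennreal (B p) \<partial>lborel)"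
    using geom_count_pi_dens_bounds[OF x, where m = m, folded A_def B_def] lx geom_count_pi_dens_nonneg
    by (intro nn_integral_mono) (simp flip: ennreal_plus ennreal_mult)
  also have "\<dots> = nu_ennreal m x + ennreal (neg_ln x) * (\<integral>\<^sup>+p. ennreal (B p) \<partial>lborel)"
    unfolding nu_ennreal_def B_def by (simp add: nn_integral_add nn_integral_cmult)
  also have "\<dots> \<le> nu_ennreal m x + ennreal (neg_ln x) * 1"
    unfolding B_def using x by (intro add_left_mono mult_left_mono pi_dens_integral_le_1) auto
  finally show ?thesis by simp
qed

lemma nu_arrow_bounds:
  assumes x: "0 < x" "x < 1"
  shows "neg_ln x ^ (m + 2) / fact (m + 2) - neg_ln x \<le> nu_arrow m x"
    and "nu_arrow m x \<le> neg_ln x ^ (m + 2) / fact (m + 2) + 1"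
  using enn2real_bounds[OF nu_ennreal_le[OF x] nu_ennreal_ge[OF x]] x
  by (simp_all add: nu_arrow_eq_enn2real neg_ln_nonneg)

lemma nu_arrow_asymp:
  assumes "m \<ge> 1"
  shows "(\<lambda>x. nu_arrow m x - (ln (1 / x)) ^ (m + 2) / fact (m + 2)) \<in> O[at_right 0](\<lambda>x. (ln x) ^ m)"
proof (rule bigoI[where c = 1])
  have "\<forall>\<^sub>F x in at_right (0::real). x \<in> {0<..<exp (- 1)}"
    by (rule eventually_at_right_real) simp
  then show "\<forall>\<^sub>F x in at_right 0. norm (nu_arrow m x - (ln (1 / x)) ^ (m + 2) / fact (m + 2))
               \<le> 1 * norm ((ln x) ^ m)"
  proof eventually_elim
    case (elim x)
    then have x0: "0 < x" "x < exp (- 1)" by auto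
    have "exp (- 1 :: real) < 1" by simp
    then have x: "0 < x" "x < 1" using x0 by linarith+
    have "ln x \<le> - 1"
      using elim ln_less_cancel_iff[of x "exp (- 1)"] by auto
    then have L1: "neg_ln x \<ge> 1" by (simp add: neg_ln_def)
    have "\<bar>nu_arrow m x - neg_ln x ^ (m + 2) / fact (m + 2)\<bar> \<le> neg_ln x"
      using nu_arrow_bounds[OF x, of m] L1 by linarith
    also have "\<dots> \<le> neg_ln x ^ m"
      using L1 assms by (metis power_one_right power_increasing)
    finally show ?case
      using x L1 by (simp add: neg_ln_def ln_div power_abs)
  qed
qed

section \<open>The expected number of distinct values\<close>

lemma pmf_geom1:
  assumes p: "0 < p" "p < 1"
  shows "pmf (geom1_pmf p) j = (if j = 0 then 0 else p * (1 - p) ^ (j - 1))"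
proof (cases j)
  case 0
  then show ?thesis unfolding geom1_pmf_def by (auto intro!: pmf_map_outside)
next
  case (Suc i)
  have "pmf (map_pmf Suc (geometric_pmf p)) (Suc i) = pmf (geometric_pmf p) i"
    by (rule pmf_map_inj') simp
  then show ?thesis using p Suc unfolding geom1_pmf_def by (simp add: mult.commute)
qed

text \<open>The density of the minimum of \<open>n\<close> uniform variables: a value of weight \<open>w\<close> is seen among
  \<open>n\<close> draws with probability \<open>1 - (1 - w)\<^sup>n\<close>, the mass this density gives to \<open>(0, w]\<close>.\<close>

definition min_unif_dens :: "nat \<Rightarrow> real \<Rightarrow> real" where
  "min_unif_dens n y = real n * (1 - y) ^ (n - 1)"

lemma min_unif_dens_nonneg: "y \<le> 1 \<Longrightarrow> min_unif_dens n y \<ge> 0"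
  by (simp add: min_unif_dens_def)

lemma min_unif_dens_measurable [measurable]: "min_unif_dens n \<in> borel_measurable borel"
  unfolding min_unif_dens_def by measurable

lemma one_minus_power_eq_integral:
  assumes "0 \<le> w" "w \<le> 1"
  shows "ennreal (1 - (1 - w) ^ n)
         = (\<integral>\<^sup>+y. ennreal (if 0 < y \<and> y < 1 \<and> y \<le> w then min_unif_dens n y else 0) \<partial>lborel)"
proof -
  have "(\<integral>\<^sup>+y. ennreal (if 0 \<le> y \<and> y \<le> w then min_unif_dens n y else 0) \<partial>lborel)
        = ennreal (- ((1 - w) ^ n) - - ((1 - 0) ^ n))"
    using assms
    by (intro nn_integral_FTC_Icc_if min_unif_dens_nonneg)
       (auto intro!: derivative_eq_intros simp: min_unif_dens_def)
  also have "(\<integral>\<^sup>+y. ennreal (if 0 \<le> y \<and> y \<le> w then min_unif_dens n y else 0) \<partial>lborel)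
           = (\<integral>\<^sup>+y. ennreal (if 0 < y \<and> y < 1 \<and> y \<le> w then min_unif_dens n y else 0) \<partial>lborel)"
  proof (rule nn_integral_cong_AE)
    show "AE y in lborel. ennreal (if 0 \<le> y \<and> y \<le> w then min_unif_dens n y else 0)
                        = ennreal (if 0 < y \<and> y < 1 \<and> y \<le> w then min_unif_dens n y else 0)"
      using AE_lborel_singleton[of 0] AE_lborel_singleton[of 1]
      by eventually_elim (use assms in auto)
  qed
  finally show ?thesis by simp
qed

definition EK_cond_ennreal :: "nat \<Rightarrow> real \<Rightarrow> ennreal" where
  "EK_cond_ennreal n p = (\<integral>\<^sup>+y. ennreal (min_unif_dens n y * geom_count p y) \<partial>lborel)"

lemma suminf_geom1_eq_EK_cond_ennreal:
  assumes p: "0 < p" "p < 1"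
  shows "(\<Sum>j. ennreal (1 - (1 - pmf (geom1_pmf p) j) ^ n)) = EK_cond_ennreal n p"
proof -
  define w where "w j = pmf (geom1_pmf p) j" for j
  have w: "0 \<le> w j" "w j \<le> 1" for j
    by (simp_all add: w_def pmf_le_1)
  have "(\<Sum>j. ennreal (1 - (1 - w j) ^ n))
        = (\<Sum>j. \<integral>\<^sup>+y. ennreal (if 0 < y \<and> y < 1 \<and> y \<le> w j then min_unif_dens n y else 0) \<partial>lborel)"
    using w by (intro suminf_cong one_minus_power_eq_integral)
  also have "\<dots> = (\<integral>\<^sup>+y. (\<Sum>j. ennreal (if 0 < y \<and> y < 1 \<and> y \<le> w j then min_unif_dens n y else 0)) \<partial>lborel)"
    by (rule nn_integral_suminf[symmetric]) measurable
  also have "\<dots> = EK_cond_ennreal n p"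
    unfolding EK_cond_ennreal_def
  proof (intro nn_integral_cong)
    fix y :: real
    show "(\<Sum>j. ennreal (if 0 < y \<and> y < 1 \<and> y \<le> w j then min_unif_dens n y else 0))
          = ennreal (min_unif_dens n y * geom_count p y)"
    proof (cases "0 < y \<and> y < 1")
      case True
      define S where "S = {j. j \<ge> 1 \<and> p * (1 - p) ^ (j - 1) \<ge> y}"
      have "{j. y \<le> w j} = S" using True p by (auto simp: S_def w_def pmf_geom1)
      then have "(\<Sum>j. ennreal (if 0 < y \<and> y < 1 \<and> y \<le> w j then min_unif_dens n y else 0))
            = (\<Sum>j. ennreal (min_unif_dens n y) * indicator S j)"
        using True by (intro suminf_cong) (auto simp: indicator_def)
      also have "\<dots> = ennreal (min_unif_dens n y) * ennreal (geom_count p y)"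
        using suminf_indicator_finite geom_weights_ge[of p y] p True
        by (simp add: ennreal_suminf_cmult S_def ennreal_of_nat_eq_real_of_nat)
      finally show ?thesis
        using True by (simp add: ennreal_mult min_unif_dens_nonneg geom_count_nonneg)
    qed (auto simp: geom_count_def)
  qed
  finally show ?thesis unfolding w_def .
qed

lemma EK_cond_eq_ennreal:
  assumes "0 < p" "p < 1"
  shows "EK_cond n p = enn2real (EK_cond_ennreal n p)"
    and "EK_cond_ennreal n p = ennreal (EK_cond n p)"
proof -
  let ?I = "\<integral>\<^sup>+xs. ennreal (real (card (set xs))) \<partial>replicate_pmf n (geom1_pmf p)"
  have "EK_cond n p = enn2real ?I"
    unfolding EK_cond_def by (rule integral_eq_nn_integral) auto
  moreover have "?I = EK_cond_ennreal n p"
    using nn_integral_card_set_replicate_pmf suminf_geom1_eq_EK_cond_ennreal[OF assms] by simp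
  moreover have "?I < \<top>"
    using nn_integral_card_set_replicate_pmf_le[of n "geom1_pmf p"]
    by (simp add: order.strict_trans1 of_nat_less_top)
  ultimately show "EK_cond n p = enn2real (EK_cond_ennreal n p)"
    and "EK_cond_ennreal n p = ennreal (EK_cond n p)"
    by auto
qed

definition EK_ennreal :: "nat \<Rightarrow> nat \<Rightarrow> ennreal" where
  "EK_ennreal m n =
     (\<integral>\<^sup>+y. ennreal (if 0 < y \<and> y < 1 then min_unif_dens n y else 0) * nu_ennreal m y \<partial>lborel)"

lemma EK_eq_nn_integral:
  "EK m n = enn2real (\<integral>\<^sup>+p. ennreal (indicator {0<..<1} p * pi_dens m p) * EK_cond_ennreal n p \<partial>lborel)"
proof -
  have "indicator {0<..<1} p *\<^sub>R (EK_cond n p * pi_dens m p)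
        = enn2real (EK_cond_ennreal n p) * (indicator {0<..<1} p * pi_dens m p)" for p
    by (cases "0 < p \<and> p < 1") (auto simp: EK_cond_eq_ennreal(1))
  then have "EK m n = (\<integral>p. enn2real (EK_cond_ennreal n p) * (indicator {0<..<1} p * pi_dens m p) \<partial>lborel)"
    unfolding EK_def set_lebesgue_integral_def by (simp only:)
  also have "\<dots> = enn2real (\<integral>\<^sup>+p. ennreal (enn2real (EK_cond_ennreal n p)
                                       * (indicator {0<..<1} p * pi_dens m p)) \<partial>lborel)"
    by (intro integral_eq_nn_integral AE_I2)
       (auto simp: EK_cond_ennreal_def indicator_def intro!: mult_nonneg_nonneg pi_dens_nonneg)
  also have "(\<integral>\<^sup>+p. ennreal (enn2real (EK_cond_ennreal n p) * (indicator {0<..<1} p * pi_dens m p)) \<partial>lborel)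
           = (\<integral>\<^sup>+p. ennreal (indicator {0<..<1} p * pi_dens m p) * EK_cond_ennreal n p \<partial>lborel)"
  proof (intro nn_integral_cong)
    fix p :: real
    show "ennreal (enn2real (EK_cond_ennreal n p) * (indicator {0<..<1} p * pi_dens m p))
          = ennreal (indicator {0<..<1} p * pi_dens m p) * EK_cond_ennreal n p"
    proof (cases "0 < p \<and> p < 1")
      case True
      then show ?thesis
        using EK_cond_eq_ennreal(2)[of p n] pi_dens_nonneg[of p m]
        by (simp add: ennreal_mult' mult.commute)
    qed simp
  qed
  finally show ?thesis .
qed

lemma nn_integral_pi_dens_EK_cond_ennreal:
  "(\<integral>\<^sup>+p. ennreal (indicator {0<..<1} p * pi_dens m p) * EK_cond_ennreal n p \<partial>lborel) = EK_ennreal m n"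
proof -
  define f where "f p y = ennreal (indicator {0<..<1} p * pi_dens m p) * ennreal (min_unif_dens n y * geom_count p y)"
    for p y :: real
  have f_swap: "f p y = ennreal (if 0 < y \<and> y < 1 then min_unif_dens n y else 0) * ennreal (geom_count p y * pi_dens m p)"
    for p y :: real
  proof (cases "0 < p \<and> p < 1 \<and> 0 < y \<and> y \<le> p")
    case True
    then show ?thesis
      using pi_dens_nonneg[of p m] min_unif_dens_nonneg[of y n] geom_count_nonneg[of p y]
      by (simp add: f_def ennreal_mult[symmetric] mult_ac)
  qed (auto simp: f_def geom_count_def)
  have "(\<integral>\<^sup>+p. ennreal (indicator {0<..<1} p * pi_dens m p) * EK_cond_ennreal n p \<partial>lborel)
        = (\<integral>\<^sup>+p. \<integral>\<^sup>+y. f p y \<partial>lborel \<partial>lborel)"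
    unfolding EK_cond_ennreal_def f_def by (intro nn_integral_cong nn_integral_cmult[symmetric]) measurable
  also have "\<dots> = (\<integral>\<^sup>+y. \<integral>\<^sup>+p. f p y \<partial>lborel \<partial>lborel)"
    unfolding f_def by (rule lborel_pair.Fubini') measurable
  also have "\<dots> = EK_ennreal m n"
    unfolding EK_ennreal_def nu_ennreal_def f_swap by (intro nn_integral_cong nn_integral_cmult) measurable
  finally show ?thesis .
qed

definition log_moment :: "nat \<Rightarrow> nat \<Rightarrow> ennreal" where
  "log_moment k n =
     (\<integral>\<^sup>+y. ennreal (if 0 < y \<and> y < 1 then min_unif_dens n y * (neg_ln y ^ k / fact k) else 0) \<partial>lborel)"

lemma log_moment_0:
  assumes "n \<ge> 1"
  shows "log_moment 0 n = 1"
proof -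
  have "log_moment 0 n = (\<integral>\<^sup>+y. ennreal (if 0 < y \<and> y < 1 \<and> y \<le> 1 then min_unif_dens n y else 0) \<partial>lborel)"
    unfolding log_moment_def by (intro nn_integral_cong) auto
  also have "\<dots> = ennreal (1 - (1 - 1) ^ n)"
    by (rule one_minus_power_eq_integral[symmetric]) auto
  finally show ?thesis using assms by simp
qed

lemma log_moment_Suc_eq_integral:
  "log_moment (Suc k) n
   = (\<integral>\<^sup>+t. ennreal (if 0 < t \<and> t \<le> 1 then neg_ln t ^ k / fact k / t * (1 - (1 - t) ^ n) else 0) \<partial>lborel)"
  (is "_ = ?rhs")
proof -
  define a where "a y = (if 0 < y \<and> y < 1 then min_unif_dens n y else 0)" for y
  define g where "g y t = (if y \<le> t \<and> t \<le> 1 then neg_ln t ^ k / fact k / t else 0)" for y t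
  have "ennreal (if 0 < y \<and> y < 1 then min_unif_dens n y * (neg_ln y ^ Suc k / fact (Suc k)) else 0)
        = ennreal (a y) * (\<integral>\<^sup>+t. ennreal (g y t) \<partial>lborel)" for y
  proof (cases "0 < y \<and> y < 1")
    case True
    then have "ennreal (min_unif_dens n y * (neg_ln y ^ Suc k / fact (Suc k)))
             = ennreal (min_unif_dens n y) * ennreal (neg_ln y ^ Suc k / fact (Suc k))"
      by (intro ennreal_mult min_unif_dens_nonneg divide_nonneg_nonneg zero_le_power neg_ln_nonneg) auto
    then show ?thesis
      using True by (simp add: a_def g_def neg_ln_power_integral)
  qed (auto simp: a_def)
  then have "log_moment (Suc k) n = (\<integral>\<^sup>+y. \<integral>\<^sup>+t. ennreal (a y) * ennreal (g y t) \<partial>lborel \<partial>lborel)"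
    unfolding log_moment_def a_def g_def by (simp add: nn_integral_cmult)
  also have "\<dots> = (\<integral>\<^sup>+t. \<integral>\<^sup>+y. ennreal (a y) * ennreal (g y t) \<partial>lborel \<partial>lborel)"
    by (rule lborel_pair.Fubini') (simp add: a_def g_def)
  also have "\<dots> = ?rhs"
  proof (intro nn_integral_cong)
    fix t :: real
    define c where "c = (if 0 < t \<and> t \<le> 1 then neg_ln t ^ k / fact k / t else 0)"
    have c0: "0 \<le> c" by (simp add: c_def neg_ln_nonneg)
    have "(\<integral>\<^sup>+y. ennreal (a y) * ennreal (g y t) \<partial>lborel)
          = (\<integral>\<^sup>+y. ennreal c * ennreal (if 0 < y \<and> y < 1 \<and> y \<le> t then min_unif_dens n y else 0) \<partial>lborel)"
      by (intro nn_integral_cong) (auto simp: a_def g_def c_def mult.commute)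
    also have "\<dots> = ennreal c * ennreal (if 0 < t \<and> t \<le> 1 then 1 - (1 - t) ^ n else 0)"
      by (auto simp: nn_integral_cmult c_def one_minus_power_eq_integral)
    finally show "(\<integral>\<^sup>+y. ennreal (a y) * ennreal (g y t) \<partial>lborel)
          = ennreal (if 0 < t \<and> t \<le> 1 then neg_ln t ^ k / fact k / t * (1 - (1 - t) ^ n) else 0)"
      using c0 by (cases "0 < t \<and> t \<le> 1") (auto simp: c_def power_le_one simp flip: ennreal_mult)
  qed
  finally show ?thesis .
qed

lemma scaled_log_moment_eq_integral:
  "ennreal (1 / real (Suc j)) * log_moment k (Suc j)
   = (\<integral>\<^sup>+t. ennreal (if 0 < t \<and> t \<le> 1 then neg_ln t ^ k / fact k * (1 - t) ^ j else 0) \<partial>lborel)"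
proof -
  have "ennreal (1 / real (Suc j)) * log_moment k (Suc j)
        = (\<integral>\<^sup>+t. ennreal (1 / real (Suc j)) * ennreal (if 0 < t \<and> t < 1
            then min_unif_dens (Suc j) t * (neg_ln t ^ k / fact k) else 0) \<partial>lborel)"
    unfolding log_moment_def by (rule nn_integral_cmult[symmetric]) measurable
  also have "\<dots> = (\<integral>\<^sup>+t. ennreal (if 0 < t \<and> t \<le> 1 then neg_ln t ^ k / fact k * (1 - t) ^ j else 0) \<partial>lborel)"
  proof (rule nn_integral_cong_AE)
    show "AE t in lborel. ennreal (1 / real (Suc j)) * ennreal (if 0 < t \<and> t < 1
            then min_unif_dens (Suc j) t * (neg_ln t ^ k / fact k) else 0)
          = ennreal (if 0 < t \<and> t \<le> 1 then neg_ln t ^ k / fact k * (1 - t) ^ j else 0)"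
      using AE_lborel_singleton[of 1]
    proof eventually_elim
      case (elim t)
      show ?case
      proof (cases "0 < t \<and> t < 1")
        case True
        define X where "X = neg_ln t ^ k * (1 - t) ^ j / fact k"
        have "0 \<le> X" using True by (simp add: X_def neg_ln_nonneg)
        then have "ennreal (1 / real (Suc j)) * ennreal (real (Suc j) * X)
                   = ennreal (1 / real (Suc j) * (real (Suc j) * X))"
          by (intro ennreal_mult[symmetric]) auto
        then have "ennreal (1 / real (Suc j)) * ennreal (real (Suc j) * X) = ennreal X"
          by (simp del: of_nat_Suc)
        then show ?thesis using True by (simp add: min_unif_dens_def X_def mult_ac)
      qed (use elim in auto)
    qed
  qed
  finally show ?thesis .
qed

lemma log_moment_Suc:
  "log_moment (Suc k) n = (\<Sum>j<n. ennreal (1 / real (Suc j)) * log_moment k (Suc j))"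
proof -
  define f where "f j t = (if 0 < t \<and> t \<le> 1 then neg_ln t ^ k / fact k * (1 - t) ^ j else 0)" for j t
  have f0: "0 \<le> f j t" for j t by (simp add: f_def neg_ln_nonneg)
  have "ennreal (if 0 < t \<and> t \<le> 1 then neg_ln t ^ k / fact k / t * (1 - (1 - t) ^ n) else 0)
        = (\<Sum>j<n. ennreal (f j t))" for t
    using f0 unfolding one_diff_power_eq[of "1 - t"]
    by (subst sum_ennreal) (auto simp: f_def sum_distrib_left)
  then have "log_moment (Suc k) n = (\<Sum>j<n. \<integral>\<^sup>+t. ennreal (f j t) \<partial>lborel)"
    unfolding log_moment_Suc_eq_integral by (simp add: nn_integral_sum f_def)
  then show ?thesis
    by (simp only: f_def scaled_log_moment_eq_integral)
qed

lemma log_moment_eq_iterated_harm: "n \<ge> 1 \<Longrightarrow> log_moment k n = ennreal (iterated_harm k n)"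
proof (induction k arbitrary: n)
  case 0
  then show ?case by (simp add: log_moment_0)
next
  case (Suc k)
  have "log_moment (Suc k) n = (\<Sum>j<n. ennreal (1 / real (Suc j)) * ennreal (iterated_harm k (Suc j)))"
    unfolding log_moment_Suc using Suc.IH by simp
  also have "\<dots> = ennreal (\<Sum>j<n. iterated_harm k (Suc j) / real (Suc j))"
    by (simp add: sum_ennreal iterated_harm_nonneg flip: ennreal_mult)
  finally show ?case by simp
qed

lemma EK_ennreal_le: "EK_ennreal m n \<le> log_moment (m + 2) n + log_moment 0 n"
proof -
  have "EK_ennreal m n \<le> (\<integral>\<^sup>+y.
              ennreal (if 0 < y \<and> y < 1 then min_unif_dens n y * (neg_ln y ^ (m + 2) / fact (m + 2)) else 0)
            + ennreal (if 0 < y \<and> y < 1 then min_unif_dens n y * (neg_ln y ^ 0 / fact 0) else 0) \<partial>lborel)"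
    unfolding EK_ennreal_def
  proof (intro nn_integral_mono)
    fix y :: real
    show "ennreal (if 0 < y \<and> y < 1 then min_unif_dens n y else 0) * nu_ennreal m y
          \<le> ennreal (if 0 < y \<and> y < 1 then min_unif_dens n y * (neg_ln y ^ (m + 2) / fact (m + 2)) else 0)
            + ennreal (if 0 < y \<and> y < 1 then min_unif_dens n y * (neg_ln y ^ 0 / fact 0) else 0)"
    proof (cases "0 < y \<and> y < 1")
      case True
      define a where "a = min_unif_dens n y"
      define c where "c = neg_ln y ^ (m + 2) / fact (m + 2)"
      have "0 \<le> a" "0 \<le> c"
        using True by (simp_all add: a_def c_def min_unif_dens_nonneg neg_ln_nonneg)
      have "ennreal a * nu_ennreal m y \<le> ennreal a * (ennreal c + 1)"
        unfolding c_def using True by (intro mult_left_mono nu_ennreal_le) auto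
      also have "\<dots> = ennreal (a * c) + ennreal (a * (neg_ln y ^ 0 / fact 0))"
        using \<open>0 \<le> a\<close> \<open>0 \<le> c\<close> by (simp add: distrib_left ennreal_mult)
      finally show ?thesis
        using True by (simp only: a_def c_def simp_thms if_True)
    next
      case False
      then show ?thesis by (simp only: if_not_P) simp
    qed
  qed
  also have "\<dots> = log_moment (m + 2) n + log_moment 0 n"
    unfolding log_moment_def by (rule nn_integral_add) simp_all
  finally show ?thesis .
qed

lemma EK_ennreal_ge: "log_moment (m + 2) n \<le> EK_ennreal m n + log_moment 1 n"
proof -
  have "log_moment (m + 2) n \<le> (\<integral>\<^sup>+y. ennreal (if 0 < y \<and> y < 1 then min_unif_dens n y else 0) * nu_ennreal m y
            + ennreal (if 0 < y \<and> y < 1 then min_unif_dens n y * (neg_ln y ^ 1 / fact 1) else 0) \<partial>lborel)"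
    unfolding log_moment_def
  proof (intro nn_integral_mono)
    fix y :: real
    show "ennreal (if 0 < y \<and> y < 1 then min_unif_dens n y * (neg_ln y ^ (m + 2) / fact (m + 2)) else 0)
          \<le> ennreal (if 0 < y \<and> y < 1 then min_unif_dens n y else 0) * nu_ennreal m y
            + ennreal (if 0 < y \<and> y < 1 then min_unif_dens n y * (neg_ln y ^ 1 / fact 1) else 0)"
    proof (cases "0 < y \<and> y < 1")
      case True
      define a where "a = min_unif_dens n y"
      define c where "c = neg_ln y ^ (m + 2) / fact (m + 2)"
      have "0 \<le> a" "0 \<le> c" "0 \<le> neg_ln y"
        using True by (simp_all add: a_def c_def min_unif_dens_nonneg neg_ln_nonneg)
      have "ennreal (a * c) = ennreal a * ennreal c"
        using \<open>0 \<le> a\<close> \<open>0 \<le> c\<close> by (rule ennreal_mult)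
      also have "\<dots> \<le> ennreal a * (nu_ennreal m y + ennreal (neg_ln y))"
        unfolding c_def using True by (intro mult_left_mono nu_ennreal_ge) auto
      also have "\<dots> = ennreal a * nu_ennreal m y + ennreal (a * (neg_ln y ^ 1 / fact 1))"
        using \<open>0 \<le> a\<close> \<open>0 \<le> neg_ln y\<close> by (simp add: distrib_left ennreal_mult)
      finally show ?thesis
        using True by (simp only: a_def c_def simp_thms if_True)
    next
      case False
      then show ?thesis by (simp only: if_not_P) simp
    qed
  qed
  also have "\<dots> = EK_ennreal m n + log_moment 1 n"
    unfolding log_moment_def EK_ennreal_def by (rule nn_integral_add) simp_all
  finally show ?thesis .
qed

lemma EK_near_iterated_harm:
  assumes "n \<ge> 1"
  shows "\<bar>EK m n - iterated_harm (m + 2) n\<bar> \<le> 1 + harm n"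
proof -
  note moments = log_moment_eq_iterated_harm[OF assms]
  have "EK_ennreal m n \<le> ennreal (iterated_harm (m + 2) n) + 1"
    using EK_ennreal_le[of m n] unfolding moments[of "m + 2"] log_moment_0[OF assms] .
  moreover have "ennreal (iterated_harm (m + 2) n) \<le> EK_ennreal m n + ennreal (harm n)"
    using EK_ennreal_ge[of m n] unfolding moments iterated_harm_1 .
  ultimately have "iterated_harm (m + 2) n - harm n \<le> EK m n" "EK m n \<le> iterated_harm (m + 2) n + 1"
    using enn2real_bounds[of "EK_ennreal m n"] harm_nonneg[of n] iterated_harm_nonneg[of "m + 2" n]
    by (auto simp: EK_eq_nn_integral nn_integral_pi_dens_EK_cond_ennreal)
  then show ?thesis
    unfolding abs_le_iff using harm_nonneg[of n, where 'a = real] by linarith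
qed

lemma EK_asymp:
  assumes "m \<ge> 1"
  shows "(\<lambda>n. EK m n - (ln (real n)) ^ (m + 2) / fact (m + 2)
                - euler_mascheroni * (ln (real n)) ^ (m + 1) / fact (m + 1))
            \<in> o(\<lambda>n. (ln (real n)) ^ (m + 1))"
proof -
  have "\<forall>\<^sub>F n in sequentially. \<bar>EK m n - iterated_harm (m + 2) n\<bar> \<le> 1 + harm n"
    using eventually_ge_at_top[of 1] by eventually_elim (rule EK_near_iterated_harm)
  from asymp_near_iterated_harm[OF _ this] assms show ?thesis by simp
qed

theorem theorem2:
  fixes m :: nat
  assumes "m \<ge> 1"
  shows "(\<lambda>x. nu_arrow m x - (ln (1 / x)) ^ (m + 2) / fact (m + 2))
            \<in> O[at_right 0](\<lambda>x. (ln x) ^ m) \<and>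
         (\<lambda>n. EK m n - (ln (real n)) ^ (m + 2) / fact (m + 2)
                - euler_mascheroni * (ln (real n)) ^ (m + 1) / fact (m + 1))
            \<in> o[at_top](\<lambda>n. (ln (real n)) ^ (m + 1))"
  using nu_arrow_asymp[OF assms] EK_asymp[OF assms] by blast

end
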